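(* Consider the bipartite Bell scenario $(2,2,2)$ with Alice's measurements $A_1,A_2$ and Bob's measurements $B_1,B_2$, all with outcomes in $\{0,1\}$. A nondisturbing behavior for this scenario is logically contextual if and only if there exist indices $i,k,j,\ell\in\{1,2\}$ with $i\neq k$ and $j\neq\ell$, and $(a,b),(\alpha_1,\alpha_2)\in\{0,1\}^2$ such that $p_{ij}(a,b)>0$, $p_{kj}(\alpha_1,b)=0$, $p_{i\ell}(a,\alpha_2)=0$, $p_{k\ell}(\lnot\alpha_1,\lnot\alpha_2)=0$, where $\lnot x=1-x$.
   Context: The contexts of the scenario are $\{A_\mu,B_\nu\}$ for $\mu,\nu\in\{1,2\}$; a behavior is a family of probability distributions $p_{\mu\nu}$ on $\{0,1\}^2$, where $p_{\mu\nu}(x,y)$ is the probability that $A_\mu=x$ and $B_\nu=y$. It is nondisturbing if the marginal distribution of each measurement is the same in every context containing it. Let $\bar p_{\mu\nu}(x,y)=1$ if $p_{\mu\nu}(x,y)>0$, else $0$. The behavior is logically noncontextual (logically local) if there exists $\bar p:\{0,1\}^{\{A_1,A_2,B_1,B_2\}}\to\{0,1\}$ such that for every context $\{A_\mu,B_\nu\}$ and $(x,y)$, $\max\{\bar p(t): t(A_\mu)=x,\ t(B_\nu)=y\}=\bar p_{\mu\nu}(x,y)$; otherwise it is logically contextual. *)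

theory Defs
  imports Complex_Main
begin

text \<open>Bell scenario (2,2,2). Measurement settings indices {1,2} and outcomes {0,1}
  are both encoded by bool (False ~ 1 / 0, True ~ 2 / 1).\<close>

datatype meas = A bool | B bool

text \<open>A behavior: p mu nu x y = probability that A_mu = x and B_nu = y in context {A_mu, B_nu}.\<close>
type_synonym behavior = "bool \<Rightarrow> bool \<Rightarrow> bool \<Rightarrow> bool \<Rightarrow> real"

definition is_behavior :: "behavior \<Rightarrow> bool" where
  "is_behavior p \<longleftrightarrow>
     (\<forall>mu nu x y. 0 \<le> p mu nu x y) \<and>
     (\<forall>mu nu. (\<Sum>x\<in>UNIV. \<Sum>y\<in>UNIV. p mu nu x y) = 1)"

definition nondisturbing :: "behavior \<Rightarrow> bool" where
  "nondisturbing p \<longleftrightarrow>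
     (\<forall>mu nu nu' x. (\<Sum>y\<in>UNIV. p mu nu x y) = (\<Sum>y\<in>UNIV. p mu nu' x y)) \<and>
     (\<forall>nu mu mu' y. (\<Sum>x\<in>UNIV. p mu nu x y) = (\<Sum>x\<in>UNIV. p mu' nu x y))"

definition pbar :: "behavior \<Rightarrow> bool \<Rightarrow> bool \<Rightarrow> bool \<Rightarrow> bool \<Rightarrow> nat" where
  "pbar p mu nu x y = (if p mu nu x y > 0 then 1 else 0)"

definition logically_noncontextual :: "behavior \<Rightarrow> bool" where
  "logically_noncontextual p \<longleftrightarrow>
     (\<exists>g :: (meas \<Rightarrow> bool) \<Rightarrow> nat. (\<forall>t. g t \<in> {0,1}) \<and>
        (\<forall>mu nu x y. Max {g t | t. t (A mu) = x \<and> t (B nu) = y} = pbar p mu nu x y))"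

definition logically_contextual :: "behavior \<Rightarrow> bool" where
  "logically_contextual p \<longleftrightarrow> \<not> logically_noncontextual p"

end

theory Submission
  imports Defs
begin

text \<open>A behaviour is logically noncontextual exactly when every possible outcome of a context
  extends to a global assignment all of whose restrictions to contexts are possible: the
  indicator of such assignments is then the required witness. In the (2,2,2) scenario an
  extension of a possible outcome (a,b) of {A_i, B_j} is a choice of values c of A_(not i)
  and d of B_(not j) making three further events possible. By nondisturbance each of
  A_(not i), B_(not j) has some value compatible with (a,b). If no extension exists, that
  value is unique: were both values of A_(not i) possible, nondisturbance would provide one
  compatible with the value d0 of B_(not j) in the remaining context. So A_(not i) = c0 and
  B_(not j) = d0 are forced, and the event (c0,d0) must be impossible; these three zeros are
  the stated pattern.\<close>

definition possible_assignment :: "behavior \<Rightarrow> (meas \<Rightarrow> bool) \<Rightarrow> bool" where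
  "possible_assignment p t \<longleftrightarrow> (\<forall>mu nu. p mu nu (t (A mu)) (t (B nu)) > 0)"

lemma extension_values_finite:
  fixes g :: "(meas \<Rightarrow> bool) \<Rightarrow> nat" and mu nu x y :: bool
  assumes "\<forall>t. g t \<in> {0, 1}"
  shows "finite {g t | t. t (A mu) = x \<and> t (B nu) = y}"
proof (rule finite_subset)
  show "{g t | t. t (A mu) = x \<and> t (B nu) = y} \<subseteq> {0, 1}"
  proof
    fix s
    assume "s \<in> {g t | t. t (A mu) = x \<and> t (B nu) = y}"
    then obtain t where "s = g t"
      by blast
    then show "s \<in> {0, 1}"
      using assms by simp
  qed
qed simp

lemma extension_values_nonempty:
  fixes g :: "(meas \<Rightarrow> bool) \<Rightarrow> nat" and mu nu x y :: bool
  shows "{g t | t. t (A mu) = x \<and> t (B nu) = y} \<noteq> {}"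
proof -
  have "g (\<lambda>m. case m of A _ \<Rightarrow> x | B _ \<Rightarrow> y) \<in> {g t | t. t (A mu) = x \<and> t (B nu) = y}"
    by auto
  then show ?thesis
    by blast
qed

lemma logically_noncontextual_imp_extendable:
  assumes "logically_noncontextual p" and "p mu nu x y > 0"
  obtains t where "possible_assignment p t" and "t (A mu) = x" and "t (B nu) = y"
proof -
  from assms(1) obtain g :: "(meas \<Rightarrow> bool) \<Rightarrow> nat" where g01: "\<forall>t. g t \<in> {0, 1}"
    and g: "\<And>mu nu x y. Max {g t | t. t (A mu) = x \<and> t (B nu) = y} = pbar p mu nu x y"
    unfolding logically_noncontextual_def by blast
  note fin = extension_values_finite[OF g01]
  have "Max {g t | t. t (A mu) = x \<and> t (B nu) = y} = 1"
    using g assms(2) by (simp add: pbar_def)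
  moreover have "Max {g t | t. t (A mu) = x \<and> t (B nu) = y} \<in> {g t | t. t (A mu) = x \<and> t (B nu) = y}"
    by (rule Max_in[OF fin extension_values_nonempty[of g mu x nu y]])
  ultimately obtain t where t: "g t = 1" "t (A mu) = x" "t (B nu) = y"
    by auto
  have "p mu' nu' (t (A mu')) (t (B nu')) > 0" for mu' nu'
  proof -
    have "g t \<le> Max {g t' | t'. t' (A mu') = t (A mu') \<and> t' (B nu') = t (B nu')}"
      by (rule Max_ge[OF fin]) auto
    then have "pbar p mu' nu' (t (A mu')) (t (B nu')) \<ge> 1"
      using g t(1) by simp
    then show ?thesis
      by (simp add: pbar_def split: if_splits)
  qed
  then show thesis
    using that t(2,3) unfolding possible_assignment_def by blast
qed

lemma extendable_imp_logically_noncontextual: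
  assumes ext: "\<And>mu nu x y. p mu nu x y > 0 \<Longrightarrow>
      \<exists>t. possible_assignment p t \<and> t (A mu) = x \<and> t (B nu) = y"
  shows "logically_noncontextual p"
  unfolding logically_noncontextual_def
proof (intro exI conjI allI)
  define g :: "(meas \<Rightarrow> bool) \<Rightarrow> nat" where
    "g t = (if possible_assignment p t then 1 else 0)" for t
  show "g t \<in> {0, 1}" for t
    by (simp add: g_def)
  fix mu nu x y
  let ?S = "{g t | t. t (A mu) = x \<and> t (B nu) = y}"
  have fin: "finite ?S"
    by (rule extension_values_finite[of g mu x nu y]) (simp add: g_def)
  have le: "s \<le> 1" if "s \<in> ?S" for s
    using that by (auto simp: g_def)
  show "Max ?S = pbar p mu nu x y"
  proof (cases "p mu nu x y > 0")
    case True
    then obtain t where t: "possible_assignment p t" "t (A mu) = x" "t (B nu) = y"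
      using ext by blast
    then have "g t \<in> ?S"
      by blast
    moreover have "g t = 1"
      using t(1) by (simp add: g_def)
    ultimately have "Max ?S = 1"
      using fin le by (intro Max_eqI) auto
    with True show ?thesis
      by (simp add: pbar_def)
  next
    case False
    then have "\<not> possible_assignment p t" if "t (A mu) = x" "t (B nu) = y" for t
      using that unfolding possible_assignment_def by blast
    then have "?S \<subseteq> {0}"
      by (auto simp: g_def)
    then have "Max ?S \<in> {0}"
      by (rule subsetD[OF _ Max_in[OF fin extension_values_nonempty[of g mu x nu y]]])
    with False show ?thesis
      by (simp add: pbar_def)
  qed
qed

lemma logically_noncontextual_iff_extendable:
  "logically_noncontextual p \<longleftrightarrow>
     (\<forall>mu nu x y. p mu nu x y > 0 \<longrightarrow>
        (\<exists>t. possible_assignment p t \<and> t (A mu) = x \<and> t (B nu) = y))"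
proof
  assume "logically_noncontextual p"
  then show "\<forall>mu nu x y. p mu nu x y > 0 \<longrightarrow>
      (\<exists>t. possible_assignment p t \<and> t (A mu) = x \<and> t (B nu) = y)"
    by (blast elim: logically_noncontextual_imp_extendable)
qed (rule extendable_imp_logically_noncontextual, blast)

lemma extendable_iff_completion:
  "(\<exists>t. possible_assignment p t \<and> t (A i) = a \<and> t (B j) = b) \<longleftrightarrow>
     p i j a b > 0 \<and>
     (\<exists>c d. p (\<not> i) j c b > 0 \<and> p i (\<not> j) a d > 0 \<and> p (\<not> i) (\<not> j) c d > 0)"
proof
  assume "\<exists>t. possible_assignment p t \<and> t (A i) = a \<and> t (B j) = b"
  then obtain t where "possible_assignment p t" "t (A i) = a" "t (B j) = b"
    by blast
  then have "p mu nu (t (A mu)) (t (B nu)) > 0" for mu nu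
    unfolding possible_assignment_def by blast
  then show "p i j a b > 0 \<and>
      (\<exists>c d. p (\<not> i) j c b > 0 \<and> p i (\<not> j) a d > 0 \<and> p (\<not> i) (\<not> j) c d > 0)"
    using \<open>t (A i) = a\<close> \<open>t (B j) = b\<close> by blast
next
  assume "p i j a b > 0 \<and>
      (\<exists>c d. p (\<not> i) j c b > 0 \<and> p i (\<not> j) a d > 0 \<and> p (\<not> i) (\<not> j) c d > 0)"
  then obtain c d where pos: "p i j a b > 0" "p (\<not> i) j c b > 0" "p i (\<not> j) a d > 0"
      "p (\<not> i) (\<not> j) c d > 0"
    by blast
  define t where
    "t m = (case m of A m' \<Rightarrow> if m' = i then a else c | B n' \<Rightarrow> if n' = j then b else d)" for m
  have "possible_assignment p t"
    unfolding possible_assignment_def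
  proof (intro allI)
    fix mu nu :: bool
    have "mu = i \<or> mu = (\<not> i)" "nu = j \<or> nu = (\<not> j)"
      by auto
    then show "p mu nu (t (A mu)) (t (B nu)) > 0"
      using pos by (elim disjE) (simp_all add: t_def)
  qed
  moreover have "t (A i) = a" "t (B j) = b"
    by (simp_all add: t_def)
  ultimately show "\<exists>t. possible_assignment p t \<and> t (A i) = a \<and> t (B j) = b"
    by blast
qed

lemma sum_pos_imp_ex_pos:
  fixes f :: "'a \<Rightarrow> 'b :: {ordered_comm_monoid_add, linorder}"
  assumes "0 < sum f S"
  shows "\<exists>x \<in> S. 0 < f x"
  using assms sum_nonpos[of S f] by (meson not_le)

lemma possible_outcome_in_other_context:
  assumes "is_behavior p" and "nondisturbing p" and "p i j a b > 0"
  shows "\<exists>c. p k j c b > 0" and "\<exists>d. p i l a d > 0"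
proof -
  have nonneg: "\<And>mu nu x y. 0 \<le> p mu nu x y"
    using assms(1) unfolding is_behavior_def by blast
  have "p i j a b \<le> (\<Sum>x\<in>UNIV. p i j x b)"
    using nonneg by (intro member_le_sum) auto
  also have "\<dots> = (\<Sum>c\<in>UNIV. p k j c b)"
    using assms(2) unfolding nondisturbing_def by blast
  finally show "\<exists>c. p k j c b > 0"
    using assms(3) sum_pos_imp_ex_pos[of "\<lambda>c. p k j c b" UNIV] by auto
  have "p i j a b \<le> (\<Sum>y\<in>UNIV. p i j a y)"
    using nonneg by (intro member_le_sum) auto
  also have "\<dots> = (\<Sum>d\<in>UNIV. p i l a d)"
    using assms(2) unfolding nondisturbing_def by blast
  finally show "\<exists>d. p i l a d > 0"
    using assms(3) sum_pos_imp_ex_pos[of "\<lambda>d. p i l a d" UNIV] by auto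
qed

lemma no_completion_iff_zero_pattern:
  assumes "is_behavior p" and "nondisturbing p" and "p i j a b > 0"
  shows "\<not> (\<exists>c d. p (\<not> i) j c b > 0 \<and> p i (\<not> j) a d > 0 \<and> p (\<not> i) (\<not> j) c d > 0) \<longleftrightarrow>
    (\<exists>\<alpha>1 \<alpha>2. p (\<not> i) j \<alpha>1 b = 0 \<and> p i (\<not> j) a \<alpha>2 = 0 \<and> p (\<not> i) (\<not> j) (\<not> \<alpha>1) (\<not> \<alpha>2) = 0)"
    (is "\<not> ?completion \<longleftrightarrow> ?zeros")
proof
  assume "\<not> ?completion"
  have nonneg: "\<And>mu nu x y. 0 \<le> p mu nu x y"
    using assms(1) unfolding is_behavior_def by blast
  have zero_iff: "p mu nu x y = 0 \<longleftrightarrow> \<not> p mu nu x y > 0" for mu nu x y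
    using nonneg[of mu nu x y] by linarith
  obtain c0 where c0: "p (\<not> i) j c0 b > 0"
    using possible_outcome_in_other_context(1)[OF assms] by blast
  obtain d0 where d0: "p i (\<not> j) a d0 > 0"
    using possible_outcome_in_other_context(2)[OF assms] by blast
  have "\<not> p (\<not> i) j (\<not> c0) b > 0"
  proof
    assume "p (\<not> i) j (\<not> c0) b > 0"
    with c0 have "p (\<not> i) j c b > 0" for c
      by (cases "c = c0") auto
    moreover obtain c where "p (\<not> i) (\<not> j) c d0 > 0"
      using possible_outcome_in_other_context(1)[OF assms(1,2) d0] by blast
    ultimately show False
      using \<open>\<not> ?completion\<close> d0 by blast
  qed
  moreover have "\<not> p i (\<not> j) a (\<not> d0) > 0"
  proof
    assume "p i (\<not> j) a (\<not> d0) > 0"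
    with d0 have "p i (\<not> j) a d > 0" for d
      by (cases "d = d0") auto
    moreover obtain d where "p (\<not> i) (\<not> j) c0 d > 0"
      using possible_outcome_in_other_context(2)[OF assms(1,2) c0] by blast
    ultimately show False
      using \<open>\<not> ?completion\<close> c0 by blast
  qed
  moreover have "\<not> p (\<not> i) (\<not> j) c0 d0 > 0"
    using \<open>\<not> ?completion\<close> c0 d0 by blast
  ultimately show ?zeros
    unfolding zero_iff by (intro exI[of _ "\<not> c0"] exI[of _ "\<not> d0"]) simp
next
  assume ?zeros
  then obtain \<alpha>1 \<alpha>2 where zeros: "p (\<not> i) j \<alpha>1 b = 0" "p i (\<not> j) a \<alpha>2 = 0"
      "p (\<not> i) (\<not> j) (\<not> \<alpha>1) (\<not> \<alpha>2) = 0"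
    by blast
  show "\<not> ?completion"
  proof
    assume ?completion
    then obtain c d where pos: "p (\<not> i) j c b > 0" "p i (\<not> j) a d > 0"
        "p (\<not> i) (\<not> j) c d > 0"
      by blast
    have "c \<noteq> \<alpha>1" "d \<noteq> \<alpha>2"
      using pos(1,2) zeros(1,2) by fastforce+
    then have "c = (\<not> \<alpha>1)" "d = (\<not> \<alpha>2)"
      by auto
    with pos(3) zeros(3) show False
      by simp
  qed
qed

lemma ex_distinct_bool_pairs:
  "(\<exists>i k j l :: bool. i \<noteq> k \<and> j \<noteq> l \<and> P i k j l) \<longleftrightarrow> (\<exists>i j. P i (\<not> i) j (\<not> j))"
proof
  assume "\<exists>i k j l. i \<noteq> k \<and> j \<noteq> l \<and> P i k j l"
  then obtain i k j l where "i \<noteq> k" "j \<noteq> l" "P i k j l"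
    by metis
  moreover from \<open>i \<noteq> k\<close> \<open>j \<noteq> l\<close> have "k = (\<not> i)" "l = (\<not> j)"
    by auto
  ultimately show "\<exists>i j. P i (\<not> i) j (\<not> j)"
    by auto
next
  assume "\<exists>i j. P i (\<not> i) j (\<not> j)"
  then obtain i j where "P i (\<not> i) j (\<not> j)"
    by metis
  show "\<exists>i k j l. i \<noteq> k \<and> j \<noteq> l \<and> P i k j l"
  proof (intro exI)
    show "i \<noteq> (\<not> i) \<and> j \<noteq> (\<not> j) \<and> P i (\<not> i) j (\<not> j)"
      using \<open>P i (\<not> i) j (\<not> j)\<close> by simp
  qed
qed

theorem corollary1:
  fixes p :: behavior
  assumes "is_behavior p" and "nondisturbing p"
  shows "logically_contextual p \<longleftrightarrow>
    (\<exists>i k j l a b \<alpha>1 \<alpha>2. i \<noteq> k \<and> j \<noteq> l \<and>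
       p i j a b > 0 \<and> p k j \<alpha>1 b = 0 \<and> p i l a \<alpha>2 = 0 \<and> p k l (\<not> \<alpha>1) (\<not> \<alpha>2) = 0)"
proof -
  have "logically_contextual p \<longleftrightarrow>
      (\<exists>i j a b. p i j a b > 0 \<and>
         \<not> (\<exists>c d. p (\<not> i) j c b > 0 \<and> p i (\<not> j) a d > 0 \<and> p (\<not> i) (\<not> j) c d > 0))"
    unfolding logically_contextual_def logically_noncontextual_iff_extendable
      extendable_iff_completion
    by blast
  also have "\<dots> \<longleftrightarrow> (\<exists>i j a b \<alpha>1 \<alpha>2. p i j a b > 0 \<and>
      p (\<not> i) j \<alpha>1 b = 0 \<and> p i (\<not> j) a \<alpha>2 = 0 \<and> p (\<not> i) (\<not> j) (\<not> \<alpha>1) (\<not> \<alpha>2) = 0)"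
    using no_completion_iff_zero_pattern[OF assms] by meson
  also have "\<dots> \<longleftrightarrow> (\<exists>i k j l a b \<alpha>1 \<alpha>2. i \<noteq> k \<and> j \<noteq> l \<and>
      p i j a b > 0 \<and> p k j \<alpha>1 b = 0 \<and> p i l a \<alpha>2 = 0 \<and> p k l (\<not> \<alpha>1) (\<not> \<alpha>2) = 0)"
    unfolding ex_distinct_bool_pairs[where P = "\<lambda>i k j l. \<exists>a b \<alpha>1 \<alpha>2. p i j a b > 0 \<and>
      p k j \<alpha>1 b = 0 \<and> p i l a \<alpha>2 = 0 \<and> p k l (\<not> \<alpha>1) (\<not> \<alpha>2) = 0", symmetric]
    by simp
  finally show ?thesis .
qed

end
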